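(* Let $\mathbf{X}^{(1)},\dots,\mathbf{X}^{(n)}$ be independent and identically distributed copies of a random vector $\mathbf{X}=(X_1,\dots,X_d)$ satisfying condition $(\mathcal{H})$, with distribution function $F$, and for $\mathbf{x}=(x_0,\dots,x_d)\in\mathbb{R}^{d+1}$ let $$\|\mathbf{x}\|_{\widehat F_n}=\frac1n\sum_{i=1}^n\max\big(|x_0|,|x_1|X^{(i)}_1,\dots,|x_d|X^{(i)}_d\big)$$ (the $F$-norm of the empirical distribution function $\widehat F_n$ of the sample). Then for any $\mathbf{x}_0\in[0,\infty)^{d+1}$, $$\sup_{\mathbf{0}\le\mathbf{x}\le\mathbf{x}_0}\big|\|\mathbf{x}\|_{\widehat F_n}-\|\mathbf{x}\|_F\big|\to0\quad\text{almost surely as } n\to\infty.$$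
   Context: Condition $(\mathcal{H})$: each $X_i$ is almost surely nonnegative with $0<E(X_i)<\infty$. The $F$-norm is $\|\mathbf{x}\|_F:=E\big(\max(|x_0|,|x_1|X_1,\dots,|x_d|X_d)\big)$ for $\mathbf{x}\in\mathbb{R}^{d+1}$. Inequalities between vectors are componentwise. *)

theory Defs
  imports "HOL-Probability.Probability"
begin

definition maxterm :: "nat \<Rightarrow> (nat \<Rightarrow> real) \<Rightarrow> (nat \<Rightarrow> real) \<Rightarrow> real" where
  "maxterm d x v = Max (insert \<bar>x 0\<bar> ((\<lambda>j. \<bar>x j\<bar> * v j) ` {1..d}))"

text \<open>F-norm: X j is the j-th component (j = 1..d) of the random vector.\<close>
definition F_norm :: "'a measure \<Rightarrow> (nat \<Rightarrow> 'a \<Rightarrow> real) \<Rightarrow> nat \<Rightarrow> (nat \<Rightarrow> real) \<Rightarrow> real" where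
  "F_norm M X d x = (\<integral>\<omega>. maxterm d x (\<lambda>j. X j \<omega>) \<partial>M)"

text \<open>Empirical F-norm from the first n sample vectors Y 0, ..., Y (n-1); Y i j is component j of sample i.\<close>
definition emp_norm :: "(nat \<Rightarrow> nat \<Rightarrow> 'a \<Rightarrow> real) \<Rightarrow> nat \<Rightarrow> nat \<Rightarrow> (nat \<Rightarrow> real) \<Rightarrow> 'a \<Rightarrow> real" where
  "emp_norm Y d n x \<omega> = (1 / real n) * (\<Sum>i<n. maxterm d x (\<lambda>j. Y i j \<omega>))"

end

theory Submission
  imports Defs
begin

text \<open>
  For fixed x the empirical F-norm is the sample mean of the i.i.d. nonnegative integrable
  variables max(|x_0|, |x_1| X_1^(i), ..., |x_d| X_d^(i)), so it converges almost surely to the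
  F-norm by the strong law of large numbers. The strong law is proved along Etemadi's lines:
  truncate the i-th summand at level i, control the truncated sums along the times floor(a^m)
  by Chebyshev's inequality and Borel-Cantelli, and interpolate between these times by
  monotonicity.

  Both norms are Lipschitz in x for the maximum distance on the coordinates 0..d, with constant
  the (empirical) mean of 1 + sum_j |X_j|, and the empirical constant converges almost surely
  too. So almost surely the convergence holds simultaneously on countably many finite
  1/(N+1)-nets of the box, and the Lipschitz bounds make it uniform.
\<close>

section \<open>Geometric subsequences\<close>

definition floor_pow :: "real \<Rightarrow> nat \<Rightarrow> nat" where
  "floor_pow a m = nat \<lfloor>a ^ m\<rfloor>"

lemma floor_pow_le: "a \<ge> 1 \<Longrightarrow> real (floor_pow a m) \<le> a ^ m"
  unfolding floor_pow_def by simp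

lemma floor_pow_gt: "a \<ge> 1 \<Longrightarrow> a ^ m < real (floor_pow a m) + 1"
  unfolding floor_pow_def using one_le_power[of a m] by linarith

lemma floor_pow_pos: "a \<ge> 1 \<Longrightarrow> floor_pow a m > 0"
  unfolding floor_pow_def using one_le_power[of a m] by linarith

lemma floor_pow_mono: "a \<ge> 1 \<Longrightarrow> m \<le> m' \<Longrightarrow> floor_pow a m \<le> floor_pow a m'"
  unfolding floor_pow_def by (intro nat_mono floor_mono power_increasing) auto

lemma tendsto_floor_pow_over_pow:
  assumes "a > 1"
  shows "(\<lambda>m. real (floor_pow a m) / a ^ m) \<longlonglongrightarrow> 1"
proof -
  have lower: "1 - inverse (a ^ m) \<le> real (floor_pow a m) / a ^ m" for m
  proof -
    have "1 - inverse (a ^ m) = (a ^ m - 1) / a ^ m"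
      using assms by (simp add: diff_divide_distrib inverse_eq_divide)
    also have "\<dots> \<le> real (floor_pow a m) / a ^ m"
      using floor_pow_gt[of a m] assms by (intro divide_right_mono) auto
    finally show ?thesis .
  qed
  have upper: "real (floor_pow a m) / a ^ m \<le> 1" for m
    using floor_pow_le[of a m] assms by simp
  have "(\<lambda>m. 1 - inverse (a ^ m)) \<longlonglongrightarrow> 1 - 0"
    using assms by (intro tendsto_intros LIMSEQ_inverse_realpow_zero)
  then have "(\<lambda>m. 1 - inverse (a ^ m)) \<longlonglongrightarrow> 1" by simp
  from tendsto_sandwich[OF always_eventually[OF allI[OF lower]]
      always_eventually[OF allI[OF upper]] this tendsto_const]
  show ?thesis .
qed

lemma tendsto_floor_pow_ratio:
  assumes "a > 1"
  shows "(\<lambda>m. real (floor_pow a (Suc m)) / real (floor_pow a m)) \<longlonglongrightarrow> a"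
proof -
  have eq: "real (floor_pow a (Suc m)) / a ^ Suc m / (real (floor_pow a m) / a ^ m) * a
      = real (floor_pow a (Suc m)) / real (floor_pow a m)" for m
    using assms floor_pow_pos[of a m] by (simp add: field_simps)
  have "(\<lambda>m. real (floor_pow a (Suc m)) / a ^ Suc m / (real (floor_pow a m) / a ^ m) * a)
      \<longlonglongrightarrow> 1 / 1 * a"
    by (intro tendsto_intros LIMSEQ_Suc[OF tendsto_floor_pow_over_pow]
        tendsto_floor_pow_over_pow assms) auto
  then show ?thesis unfolding eq by simp
qed

lemma filterlim_floor_pow_at_top:
  assumes "a > 1"
  shows "filterlim (floor_pow a) at_top sequentially"
proof -
  have "filterlim (\<lambda>m. a ^ m) at_top sequentially"
    using assms
    by (intro filterlim_at_infinity_imp_filterlim_at_top filterlim_realpow_sequentially_gt1) auto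
  then show ?thesis
    unfolding floor_pow_def
    by (intro filterlim_compose[OF filterlim_nat_sequentially]
        filterlim_compose[OF filterlim_floor_sequentially])
qed

lemma floor_pow_bracket:
  assumes a: "a > 1" and n: "n \<ge> 1"
  obtains m where "floor_pow a m \<le> n" and "n \<le> floor_pow a (Suc m)"
proof
  define m where "m = nat \<lfloor>log a (real n)\<rfloor>"
  have m: "real m = real_of_int \<lfloor>log a (real n)\<rfloor>" using a n unfolding m_def by simp
  have "a ^ m = a powr real m" using a by (simp add: powr_realpow)
  also have "\<dots> \<le> a powr log a (real n)" using a m by (intro powr_mono) auto
  also have "\<dots> = real n" using a n by simp
  finally show "floor_pow a m \<le> n" using floor_pow_le[of a m] a by simp
  have "real n = a powr log a (real n)" using a n by simp
  also have "\<dots> < a powr real (Suc m)" using a m by (intro powr_less_mono) (auto, linarith)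
  also have "\<dots> = a ^ Suc m" using a by (simp add: powr_realpow del: of_nat_Suc)
  finally show "n \<le> floor_pow a (Suc m)" using floor_pow_gt[of a "Suc m"] a by simp
qed

lemma tendsto_floor_pow_cross_means:
  fixes s :: "nat \<Rightarrow> real"
  assumes a: "a > 1" and lim: "(\<lambda>m. s (floor_pow a m) / real (floor_pow a m)) \<longlonglongrightarrow> \<mu>"
  shows "(\<lambda>m. s (floor_pow a (Suc m)) / real (floor_pow a m)) \<longlonglongrightarrow> \<mu> * a"
    and "(\<lambda>m. s (floor_pow a m) / real (floor_pow a (Suc m))) \<longlonglongrightarrow> \<mu> / a"
proof -
  let ?k = "\<lambda>m. real (floor_pow a m)"
  have k_pos: "?k m > 0" for m using floor_pow_pos[of a m] a by simp
  have "(\<lambda>m. s (floor_pow a (Suc m)) / ?k (Suc m) * (?k (Suc m) / ?k m)) \<longlonglongrightarrow> \<mu> * a"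
    by (intro tendsto_intros LIMSEQ_Suc[OF lim] tendsto_floor_pow_ratio[OF a])
  moreover have "s (floor_pow a (Suc m)) / ?k (Suc m) * (?k (Suc m) / ?k m)
      = s (floor_pow a (Suc m)) / ?k m" for m
    using k_pos[of m] k_pos[of "Suc m"] by simp
  ultimately show "(\<lambda>m. s (floor_pow a (Suc m)) / ?k m) \<longlonglongrightarrow> \<mu> * a"
    by (simp only:)
  have "(\<lambda>m. s (floor_pow a m) / ?k m / (?k (Suc m) / ?k m)) \<longlonglongrightarrow> \<mu> / a"
    using a by (intro tendsto_intros lim tendsto_floor_pow_ratio[OF a]) auto
  moreover have "s (floor_pow a m) / ?k m / (?k (Suc m) / ?k m)
      = s (floor_pow a m) / ?k (Suc m)" for m
    using k_pos[of m] k_pos[of "Suc m"] by simp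
  ultimately show "(\<lambda>m. s (floor_pow a m) / ?k (Suc m)) \<longlonglongrightarrow> \<mu> / a"
    by (simp only:)
qed

lemma mono_mean_eventually_bounds:
  fixes s :: "nat \<Rightarrow> real"
  assumes a: "a > 1" and s_nonneg: "\<And>n. 0 \<le> s n" and s_mono: "mono s"
    and lim: "(\<lambda>m. s (floor_pow a m) / real (floor_pow a m)) \<longlonglongrightarrow> \<mu>" and e: "e > 0"
  shows "\<forall>\<^sub>F n in sequentially. \<mu> / a - e < s n / real n \<and> s n / real n < \<mu> * a + e"
proof -
  let ?k = "\<lambda>m. real (floor_pow a m)"
  have k_pos: "?k m > 0" for m using floor_pow_pos[of a m] a by simp
  have "\<forall>\<^sub>F m in sequentially. s (floor_pow a (Suc m)) / ?k m < \<mu> * a + e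
      \<and> \<mu> / a - e < s (floor_pow a m) / ?k (Suc m)"
    using order_tendstoD(2)[OF tendsto_floor_pow_cross_means(1)[OF a lim]]
      order_tendstoD(1)[OF tendsto_floor_pow_cross_means(2)[OF a lim]] e
    by (intro eventually_conj) auto
  then obtain J where J: "\<And>m. m \<ge> J \<Longrightarrow> s (floor_pow a (Suc m)) / ?k m < \<mu> * a + e
      \<and> \<mu> / a - e < s (floor_pow a m) / ?k (Suc m)"
    unfolding eventually_sequentially by blast
  show ?thesis unfolding eventually_sequentially
  proof (intro exI[of _ "Suc (floor_pow a J)"] allI impI)
    fix n assume n: "Suc (floor_pow a J) \<le> n"
    then obtain m where m: "floor_pow a m \<le> n" "n \<le> floor_pow a (Suc m)"
      using floor_pow_bracket[OF a] by (metis le_add1 plus_1_eq_Suc order_trans)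
    have "J \<le> m"
    proof (rule ccontr)
      assume "\<not> J \<le> m"
      then have "floor_pow a (Suc m) \<le> floor_pow a J" using a by (intro floor_pow_mono) auto
      then show False using m n by simp
    qed
    have n_pos: "real n > 0" using n by simp
    have "s n / real n \<le> s (floor_pow a (Suc m)) / real n"
      using monoD[OF s_mono m(2)] n_pos by (simp add: divide_right_mono)
    also have "\<dots> \<le> s (floor_pow a (Suc m)) / ?k m"
      using m(1) k_pos[of m] s_nonneg by (intro divide_left_mono) auto
    also have "\<dots> < \<mu> * a + e" using J[OF \<open>J \<le> m\<close>] by simp
    finally have upper_n: "s n / real n < \<mu> * a + e" .
    have "\<mu> / a - e < s (floor_pow a m) / ?k (Suc m)" using J[OF \<open>J \<le> m\<close>] by simp
    also have "\<dots> \<le> s (floor_pow a m) / real n"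
      using m(2) n_pos s_nonneg by (intro divide_left_mono) auto
    also have "\<dots> \<le> s n / real n"
      using monoD[OF s_mono m(1)] n_pos by (simp add: divide_right_mono)
    finally show "\<mu> / a - e < s n / real n \<and> s n / real n < \<mu> * a + e"
      using upper_n by simp
  qed
qed

text \<open>
  The ratios a = 1 + 1/(r+1) form a countable family, so an almost sure version of the
  hypothesis can hold for all of them at once.
\<close>

lemma mono_mean_tendsto_from_floor_pow:
  fixes s :: "nat \<Rightarrow> real"
  assumes s_nonneg: "\<And>n. 0 \<le> s n" and s_mono: "mono s" and \<mu>: "\<mu> \<ge> 0"
    and lim: "\<And>r. (\<lambda>m. s (floor_pow (1 + 1 / Suc r) m) / real (floor_pow (1 + 1 / Suc r) m)) \<longlonglongrightarrow> \<mu>"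
  shows "(\<lambda>n. s n / real n) \<longlonglongrightarrow> \<mu>"
proof (rule LIMSEQ_I)
  fix \<epsilon> :: real assume \<epsilon>: "\<epsilon> > 0"
  obtain r :: nat where "2 * \<mu> / \<epsilon> < r" using reals_Archimedean2 by blast
  define q where "q = real (Suc r)"
  have q: "q > 0" "\<mu> / q < \<epsilon> / 2"
    using \<open>2 * \<mu> / \<epsilon> < r\<close> \<epsilon> unfolding q_def by (simp_all add: field_simps)
  define a where "a = 1 + 1 / q"
  have a: "a > 1" using q unfolding a_def by simp
  have "\<mu> - \<mu> / a = \<mu> / (q + 1)" using q unfolding a_def by (simp add: field_simps)
  also have "\<dots> \<le> \<mu> / q" using q \<mu> by (intro divide_left_mono) auto
  finally have lo: "\<mu> - \<epsilon> \<le> \<mu> / a - \<epsilon> / 2" using q by linarith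
  have hi: "\<mu> * a + \<epsilon> / 2 \<le> \<mu> + \<epsilon>" using q unfolding a_def by (simp add: field_simps)
  have "\<forall>\<^sub>F n in sequentially. \<mu> / a - \<epsilon> / 2 < s n / real n \<and> s n / real n < \<mu> * a + \<epsilon> / 2"
    using mono_mean_eventually_bounds[OF a s_nonneg s_mono lim[of r, folded q_def, folded a_def]] \<epsilon>
    by simp
  then have "\<forall>\<^sub>F n in sequentially. norm (s n / real n - \<mu>) < \<epsilon>"
    by eventually_elim (use lo hi in \<open>auto simp: abs_less_iff\<close>)
  then show "\<exists>no. \<forall>n\<ge>no. norm (s n / real n - \<mu>) < \<epsilon>"
    unfolding eventually_sequentially .
qed

lemma sq_over_floor_pow_le:
  assumes a: "a > 1"
  shows "z\<^sup>2 / real (floor_pow a m) \<le> 2 * z\<^sup>2 * (1 / a) ^ m"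
proof -
  have "a ^ m \<le> 2 * real (floor_pow a m)"
    using floor_pow_gt[of a m] floor_pow_pos[of a m] a by linarith
  then have "z\<^sup>2 / real (floor_pow a m) \<le> z\<^sup>2 / (a ^ m / 2)"
    using a floor_pow_pos[of a m] by (intro divide_left_mono) auto
  also have "\<dots> = 2 * z\<^sup>2 * (1 / a) ^ m" by (simp add: power_one_over)
  finally show ?thesis .
qed

lemma suminf_floor_pow_sq_le:
  assumes a: "a > 1" and z: "z \<ge> 0"
  shows "(\<Sum>m. ennreal (if z \<le> real (floor_pow a m) then z\<^sup>2 / real (floor_pow a m) else 0))
          \<le> ennreal (2 * a / (a - 1) * z)"
proof (cases "z = 0")
  case False
  obtain m0 where m0: "z \<le> a ^ m0" and m0_least: "\<And>m. z \<le> a ^ m \<Longrightarrow> m0 \<le> m"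
  proof
    show "z \<le> a ^ (LEAST m. z \<le> a ^ m)"
      by (rule LeastI_ex) (use real_arch_pow[OF a, of z] in \<open>auto intro: less_imp_le\<close>)
  qed (rule Least_le)
  define h where "h m = (if m0 \<le> m then 2 * z\<^sup>2 * (1 / a) ^ m else 0)" for m
  have term_le: "(if z \<le> real (floor_pow a m) then z\<^sup>2 / real (floor_pow a m) else 0) \<le> h m" for m
  proof (cases "z \<le> real (floor_pow a m)")
    case True
    then have "m0 \<le> m" using floor_pow_le[of a m] a by (intro m0_least) simp
    then show ?thesis using True sq_over_floor_pow_le[OF a] unfolding h_def by simp
  qed (use a in \<open>simp add: h_def\<close>)
  have h_shift: "(\<lambda>n. h (n + m0)) sums (2 * z\<^sup>2 * (1 / a) ^ m0 * (1 / (1 - 1 / a)))"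
  proof -
    have "(\<lambda>n. 2 * z\<^sup>2 * (1 / a) ^ m0 * (1 / a) ^ n)
        sums (2 * z\<^sup>2 * (1 / a) ^ m0 * (1 / (1 - 1 / a)))"
      using a by (intro sums_mult geometric_sums) auto
    then show ?thesis unfolding h_def by (simp add: power_add mult_ac)
  qed
  have h_summable: "summable h"
    using h_shift summable_iff_shift[of h m0] by (auto simp: sums_iff)
  have "suminf h = (\<Sum>n. h (n + m0)) + (\<Sum>i<m0. h i)"
    by (rule suminf_split_initial_segment[OF h_summable])
  also have "\<dots> = 2 * z\<^sup>2 * (1 / a) ^ m0 * (1 / (1 - 1 / a))"
    using h_shift by (simp add: sums_iff h_def)
  also have "\<dots> = (2 * a / (a - 1) * z) * (z * (1 / a) ^ m0)"
    using a by (simp add: field_simps power2_eq_square)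
  also have "\<dots> \<le> 2 * a / (a - 1) * z"
    using m0 a z by (intro mult_left_le) (auto simp: field_simps)
  finally have "suminf h \<le> 2 * a / (a - 1) * z" .
  have "(\<Sum>m. ennreal (if z \<le> real (floor_pow a m) then z\<^sup>2 / real (floor_pow a m) else 0))
      \<le> (\<Sum>m. ennreal (h m))"
    by (intro suminf_le summableI ennreal_leI term_le)
  also have "\<dots> = ennreal (suminf h)"
    using a by (intro suminf_ennreal2 h_summable) (simp add: h_def)
  also have "\<dots> \<le> ennreal (2 * a / (a - 1) * z)" by (rule ennreal_leI) fact
  finally show ?thesis .
qed simp

section \<open>Strong law of large numbers for pairwise independent nonnegative variables\<close>

lemma cesaro_mean_tendsto:
  fixes d :: "nat \<Rightarrow> real"
  assumes "d \<longlonglongrightarrow> L"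
  shows "(\<lambda>n. (\<Sum>i<n. d i) / real n) \<longlonglongrightarrow> L"
proof (rule LIMSEQ_I)
  fix \<epsilon> :: real assume \<epsilon>: "\<epsilon> > 0"
  obtain K where K: "\<And>i. i \<ge> K \<Longrightarrow> \<bar>d i - L\<bar> < \<epsilon> / 2"
    using LIMSEQ_D[OF assms, of "\<epsilon> / 2"] \<epsilon> by auto
  define C where "C = (\<Sum>i<K. \<bar>d i - L\<bar>)"
  obtain N :: nat where N: "2 * C / \<epsilon> < N" using reals_Archimedean2 by blast
  show "\<exists>no. \<forall>n\<ge>no. norm ((\<Sum>i<n. d i) / real n - L) < \<epsilon>"
  proof (intro exI[of _ "Suc N"] allI impI)
    fix n assume n: "Suc N \<le> n"
    have "\<bar>(\<Sum>i<n. d i) - real n * L\<bar> = \<bar>\<Sum>i<n. d i - L\<bar>" by (simp add: sum_subtractf)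
    also have "\<dots> \<le> (\<Sum>i<n. \<bar>d i - L\<bar>)" by (rule sum_abs)
    also have "\<dots> \<le> (\<Sum>i<n. (if i < K then \<bar>d i - L\<bar> else 0) + \<epsilon> / 2)"
      using K \<epsilon> by (intro sum_mono) (auto simp: less_imp_le)
    also have "\<dots> = (\<Sum>i\<in>{..<n} \<inter> {..<K}. \<bar>d i - L\<bar>) + real n * (\<epsilon> / 2)"
      by (simp add: sum.distrib sum.inter_restrict)
    also have "\<dots> \<le> C + real n * (\<epsilon> / 2)"
      unfolding C_def by (intro add_right_mono sum_mono2) auto
    also have "\<dots> < real n * \<epsilon>"
    proof -
      have "2 * C < real N * \<epsilon>" using N \<epsilon> by (simp add: field_simps)
      also have "\<dots> \<le> real n * \<epsilon>" using n \<epsilon> by simp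
      finally show ?thesis by simp
    qed
    finally show "norm ((\<Sum>i<n. d i) / real n - L) < \<epsilon>"
      using n by (simp add: field_simps)
  qed
qed

lemma suminf_indicator_less_le:
  fixes z :: real assumes "z \<ge> 0"
  shows "(\<Sum>i. of_bool (real i < z) :: ennreal) \<le> ennreal (z + 1)"
proof -
  define N where "N = nat \<lceil>z\<rceil>"
  have "(\<Sum>i. of_bool (real i < z) :: ennreal) = (\<Sum>i<N. of_bool (real i < z))"
    by (rule suminf_finite) (auto simp: N_def not_less nat_le_iff ceiling_le_iff)
  also have "\<dots> \<le> (\<Sum>i<N. 1)" by (intro sum_mono) simp
  also have "\<dots> = ennreal (real N)" by (simp add: ennreal_of_nat_eq_real_of_nat)
  also have "\<dots> \<le> ennreal (z + 1)" unfolding N_def using assms by (intro ennreal_leI) linarith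
  finally show ?thesis .
qed

lemma (in prob_space) indep_var_centered_prod_integral:
  fixes X Y :: "'a \<Rightarrow> real"
  assumes "indep_var borel X borel Y" and "integrable M X" and "integrable M Y"
  shows "(\<integral>\<omega>. (X \<omega> - expectation X) * (Y \<omega> - expectation Y) \<partial>M) = 0"
proof -
  have "indep_var borel ((\<lambda>x. x - expectation X) \<circ> X) borel ((\<lambda>x. x - expectation Y) \<circ> Y)"
    by (rule indep_var_compose[OF assms(1)]) auto
  then show ?thesis
    using assms(2,3) by (simp add: o_def indep_var_lebesgue_integral prob_space)
qed

lemma (in prob_space) variance_sum_pairwise_indep:
  fixes X :: "'i \<Rightarrow> 'a \<Rightarrow> real"
  assumes I: "finite I"
    and meas: "\<And>i. i \<in> I \<Longrightarrow> X i \<in> borel_measurable M"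
    and sq_int: "\<And>i. i \<in> I \<Longrightarrow> integrable M (\<lambda>\<omega>. (X i \<omega>)\<^sup>2)"
    and indep: "\<And>i j. i \<in> I \<Longrightarrow> j \<in> I \<Longrightarrow> i \<noteq> j \<Longrightarrow> indep_var borel (X i) borel (X j)"
  shows "variance (\<lambda>\<omega>. \<Sum>i\<in>I. X i \<omega>) = (\<Sum>i\<in>I. variance (X i))"
proof -
  have int: "integrable M (X i)" if "i \<in> I" for i
    using that by (intro square_integrable_imp_integrable[OF meas sq_int])
  define U where "U i \<omega> = X i \<omega> - expectation (X i)" for i \<omega>
  have U_prod_int: "integrable M (\<lambda>\<omega>. U i \<omega> * U j \<omega>)" if "i \<in> I" "j \<in> I" for i j
  proof -
    have "integrable M (\<lambda>\<omega>. X i \<omega> * X j \<omega>)"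
    proof (cases "i = j")
      case True
      then show ?thesis using sq_int[OF that(1)] by (simp add: power2_eq_square)
    qed (use that indep int in \<open>blast intro: indep_var_integrable\<close>)
    then show ?thesis
      unfolding U_def using int[OF that(1)] int[OF that(2)] by (simp add: algebra_simps)
  qed
  have U_cross: "expectation (\<lambda>\<omega>. U i \<omega> * U j \<omega>) = 0" if "i \<in> I" "j \<in> I" "i \<noteq> j" for i j
    unfolding U_def using that by (intro indep_var_centered_prod_integral indep int)
  have "(\<Sum>i\<in>I. X i \<omega>) - expectation (\<lambda>\<omega>. \<Sum>i\<in>I. X i \<omega>) = (\<Sum>i\<in>I. U i \<omega>)" for \<omega>
    unfolding U_def using int by (simp add: sum_subtractf)
  then have "variance (\<lambda>\<omega>. \<Sum>i\<in>I. X i \<omega>) = expectation (\<lambda>\<omega>. \<Sum>i\<in>I. \<Sum>j\<in>I. U i \<omega> * U j \<omega>)"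
    by (simp add: power2_eq_square sum_product)
  also have "\<dots> = (\<Sum>i\<in>I. \<Sum>j\<in>I. expectation (\<lambda>\<omega>. U i \<omega> * U j \<omega>))"
    using U_prod_int by (simp add: integrable_sum)
  also have "\<dots> = (\<Sum>i\<in>I. expectation (\<lambda>\<omega>. U i \<omega> * U i \<omega>))"
    using I U_cross by (intro sum.cong refl) (auto simp: sum.remove[of I] intro!: sum.neutral)
  also have "\<dots> = (\<Sum>i\<in>I. variance (X i))"
    by (simp add: U_def power2_eq_square)
  finally show ?thesis .
qed

lemma tendsto_zero_if_eventually_less_inverse_Suc:
  fixes f :: "'b \<Rightarrow> real"
  assumes "\<And>j. \<forall>\<^sub>F x in F. \<bar>f x\<bar> < 1 / real (Suc j)"
  shows "(f \<longlongrightarrow> 0) F"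
proof (rule tendstoI)
  fix e :: real assume "e > 0"
  then obtain j where "1 / real (Suc j) < e"
    using nat_approx_posE by blast
  with assms[of j] show "\<forall>\<^sub>F x in F. dist (f x) 0 < e"
    by (auto elim: eventually_mono)
qed

definition trunc_at :: "real \<Rightarrow> real \<Rightarrow> real" where
  "trunc_at c x = (if x \<le> c then x else 0)"

lemma trunc_at_measurable[measurable]: "trunc_at c \<in> borel_measurable borel"
  unfolding trunc_at_def[abs_def] by measurable

lemma trunc_at_nonneg: "0 \<le> x \<Longrightarrow> 0 \<le> trunc_at c x"
  by (simp add: trunc_at_def)

lemma trunc_at_le_self: "0 \<le> x \<Longrightarrow> trunc_at c x \<le> x"
  by (simp add: trunc_at_def)

lemma trunc_at_le_bound: "0 \<le> c \<Longrightarrow> trunc_at c x \<le> c"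
  by (simp add: trunc_at_def)

lemma trunc_at_mono_bound: "0 \<le> x \<Longrightarrow> c \<le> c' \<Longrightarrow> trunc_at c x \<le> trunc_at c' x"
  by (simp add: trunc_at_def)

text \<open>
  Etemadi's argument needs only pairwise independence; nonnegativity is what allows
  interpolating between the times floor(a^m).
\<close>

locale pairwise_iid_nonneg = prob_space +
  fixes Z :: "nat \<Rightarrow> 'a \<Rightarrow> real"
  assumes Z_measurable[measurable]: "\<And>i. Z i \<in> borel_measurable M"
    and Z_indep: "\<And>i j. i \<noteq> j \<Longrightarrow> indep_var borel (Z i) borel (Z j)"
    and Z_distr: "\<And>i. distr M borel (Z i) = distr M borel (Z 0)"
    and Z_nonneg: "\<And>i \<omega>. 0 \<le> Z i \<omega>"
    and Z_integrable: "integrable M (Z 0)"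
begin

lemma integral_comp_Z:
  fixes f :: "real \<Rightarrow> real"
  assumes "f \<in> borel_measurable borel"
  shows "expectation (\<lambda>\<omega>. f (Z i \<omega>)) = expectation (\<lambda>\<omega>. f (Z 0 \<omega>))"
proof -
  have "expectation (\<lambda>\<omega>. f (Z j \<omega>)) = integral\<^sup>L (distr M borel (Z j)) f" for j
    using assms by (intro integral_distr[symmetric]) auto
  then show ?thesis by (simp add: Z_distr[of i])
qed

lemma prob_Z_greater: "prob {\<omega>\<in>space M. t < Z i \<omega>} = prob {\<omega>\<in>space M. t < Z 0 \<omega>}"
proof -
  have eq: "{\<omega>\<in>space M. t < Z j \<omega>} = Z j -` {t<..} \<inter> space M" for j by auto
  have "prob (Z j -` {t<..} \<inter> space M) = measure (distr M borel (Z j)) {t<..}" for j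
    by (intro measure_distr[symmetric]) auto
  then show ?thesis unfolding eq by (simp add: Z_distr[of i])
qed

lemma AE_eventually_Z_le_index: "AE \<omega> in M. \<forall>\<^sub>F i in sequentially. Z i \<omega> \<le> real i"
proof -
  define A where "A i = {\<omega>\<in>space M. real i < Z 0 \<omega>}" for i
  have [measurable]: "A i \<in> sets M" for i unfolding A_def by measurable
  have "(\<Sum>i. ennreal (prob (A i))) = (\<integral>\<^sup>+\<omega>. (\<Sum>i. indicator (A i) \<omega>) \<partial>M)"
    by (simp add: emeasure_eq_measure[symmetric] nn_integral_suminf)
  also have "\<dots> \<le> (\<integral>\<^sup>+\<omega>. ennreal (Z 0 \<omega> + 1) \<partial>M)"
    using suminf_indicator_less_le[OF Z_nonneg]
    by (intro nn_integral_mono) (simp add: A_def indicator_def)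
  also have "\<dots> = ennreal (expectation (\<lambda>\<omega>. Z 0 \<omega> + 1))"
    using Z_integrable Z_nonneg by (intro nn_integral_eq_integral) (auto intro: add_nonneg_nonneg)
  finally have "(\<Sum>i. ennreal (prob (A i))) \<noteq> top" by (auto simp: top_unique)
  moreover have "prob {\<omega>\<in>space M. real i < Z i \<omega>} = prob (A i)" for i
    unfolding A_def by (rule prob_Z_greater)
  ultimately have "summable (\<lambda>i. prob {\<omega>\<in>space M. real i < Z i \<omega>})"
    by (intro summable_suminf_not_top) simp_all
  moreover have "{\<omega>\<in>space M. real i < Z i \<omega>} \<in> sets M" for i by measurable
  ultimately have "AE \<omega> in M. \<forall>\<^sub>F i in sequentially. \<omega> \<in> space M - {\<omega>\<in>space M. real i < Z i \<omega>}"
    by (intro borel_cantelli_AE1) (auto simp: emeasure_eq_measure)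
  then show ?thesis
    by (rule AE_mp) (auto elim!: eventually_mono)
qed

definition truncated :: "nat \<Rightarrow> 'a \<Rightarrow> real" where
  "truncated i \<omega> = trunc_at (real i) (Z i \<omega>)"

lemma truncated_measurable[measurable]: "truncated i \<in> borel_measurable M"
  unfolding truncated_def[abs_def] by measurable

lemma truncated_nonneg: "0 \<le> truncated i \<omega>"
  unfolding truncated_def by (rule trunc_at_nonneg[OF Z_nonneg])

lemma truncated_le: "truncated i \<omega> \<le> real i"
  unfolding truncated_def by (rule trunc_at_le_bound) simp

lemma truncated_integrable: "integrable M (\<lambda>\<omega>. (truncated i \<omega>) ^ p)"
  using truncated_nonneg truncated_le
  by (intro integrable_const_bound[where B="real i ^ p"] AE_I2) (auto intro: power_mono)

lemma truncated_indep: "i \<noteq> j \<Longrightarrow> indep_var borel (truncated i) borel (truncated j)"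
  using indep_var_compose[OF Z_indep trunc_at_measurable trunc_at_measurable]
  by (simp add: truncated_def[abs_def] o_def)

lemma expectation_truncated:
  "expectation (\<lambda>\<omega>. (truncated i \<omega>) ^ p) = expectation (\<lambda>\<omega>. (trunc_at (real i) (Z 0 \<omega>)) ^ p)"
  unfolding truncated_def by (rule integral_comp_Z) measurable

lemma integrable_trunc_at_Z0: "c \<ge> 0 \<Longrightarrow> integrable M (\<lambda>\<omega>. (trunc_at c (Z 0 \<omega>)) ^ p)"
  using Z_nonneg trunc_at_nonneg trunc_at_le_bound
  by (intro integrable_const_bound[where B="c ^ p"] AE_I2) (auto intro: power_mono)

lemma tendsto_mean_expectation_truncated:
  "(\<lambda>n. (\<Sum>i<n. expectation (truncated i)) / real n) \<longlonglongrightarrow> expectation (Z 0)"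
proof (rule cesaro_mean_tendsto)
  have "(\<lambda>i. expectation (\<lambda>\<omega>. trunc_at (real i) (Z 0 \<omega>))) \<longlonglongrightarrow> expectation (Z 0)"
  proof (rule integral_dominated_convergence[where w="Z 0"])
    show "AE \<omega> in M. (\<lambda>i. trunc_at (real i) (Z 0 \<omega>)) \<longlonglongrightarrow> Z 0 \<omega>"
    proof (intro AE_I2 tendsto_eventually)
      fix \<omega>
      obtain N :: nat where "Z 0 \<omega> \<le> real N" using real_arch_simple by blast
      then show "\<forall>\<^sub>F i in sequentially. trunc_at (real i) (Z 0 \<omega>) = Z 0 \<omega>"
        unfolding eventually_sequentially trunc_at_def by (intro exI[of _ N]) auto
    qed
    show "AE \<omega> in M. norm (trunc_at (real i) (Z 0 \<omega>)) \<le> Z 0 \<omega>" for i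
      using Z_nonneg trunc_at_nonneg trunc_at_le_self by simp
  qed (use Z_integrable in auto)
  then show "(\<lambda>i. expectation (truncated i)) \<longlonglongrightarrow> expectation (Z 0)"
    using expectation_truncated[where p=1] by simp
qed

lemma variance_sum_truncated_le:
  "variance (\<lambda>\<omega>. \<Sum>i<n. truncated i \<omega>) \<le> real n * expectation (\<lambda>\<omega>. (trunc_at (real n) (Z 0 \<omega>))\<^sup>2)"
proof -
  have "variance (\<lambda>\<omega>. \<Sum>i<n. truncated i \<omega>) = (\<Sum>i<n. variance (truncated i))"
    by (intro variance_sum_pairwise_indep truncated_integrable truncated_indep) auto
  also have "\<dots> \<le> (\<Sum>i<n. expectation (\<lambda>\<omega>. (trunc_at (real n) (Z 0 \<omega>))\<^sup>2))"
  proof (rule sum_mono)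
    fix i assume "i \<in> {..<n}"
    have "variance (truncated i) \<le> expectation (\<lambda>\<omega>. (truncated i \<omega>)\<^sup>2)"
      using truncated_integrable[of i 1] truncated_integrable[of i 2] by (simp add: variance_eq)
    also have "\<dots> = expectation (\<lambda>\<omega>. (trunc_at (real i) (Z 0 \<omega>))\<^sup>2)"
      by (rule expectation_truncated)
    also have "\<dots> \<le> expectation (\<lambda>\<omega>. (trunc_at (real n) (Z 0 \<omega>))\<^sup>2)"
    proof (rule integral_mono[OF integrable_trunc_at_Z0 integrable_trunc_at_Z0])
      show "(trunc_at (real i) (Z 0 \<omega>))\<^sup>2 \<le> (trunc_at (real n) (Z 0 \<omega>))\<^sup>2" for \<omega>
        using \<open>i \<in> {..<n}\<close> Z_nonneg[of 0 \<omega>]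
        by (intro power_mono trunc_at_mono_bound trunc_at_nonneg) auto
    qed simp_all
    finally show "variance (truncated i) \<le> expectation (\<lambda>\<omega>. (trunc_at (real n) (Z 0 \<omega>))\<^sup>2)" .
  qed
  finally show ?thesis by simp
qed

lemma prob_truncated_sum_deviation_le:
  assumes "\<epsilon> > 0" and "k > 0"
  shows "prob {\<omega>\<in>space M. \<epsilon> * real k \<le> \<bar>(\<Sum>i<k. truncated i \<omega>) - (\<Sum>i<k. expectation (truncated i))\<bar>}
           \<le> expectation (\<lambda>\<omega>. (trunc_at (real k) (Z 0 \<omega>))\<^sup>2) / (\<epsilon>\<^sup>2 * real k)"
proof -
  let ?S = "\<lambda>\<omega>. \<Sum>i<k. truncated i \<omega>"
  have "integrable M (\<lambda>\<omega>. (?S \<omega>)\<^sup>2)"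
    using truncated_nonneg truncated_le
    by (intro integrable_const_bound[where B="(\<Sum>i<k. real i)\<^sup>2"] AE_I2)
       (auto intro!: power_mono sum_mono sum_nonneg)
  moreover have "expectation ?S = (\<Sum>i<k. expectation (truncated i))"
    using truncated_integrable[where p=1] by simp
  ultimately have "prob {\<omega>\<in>space M. \<epsilon> * real k \<le> \<bar>?S \<omega> - (\<Sum>i<k. expectation (truncated i))\<bar>}
      \<le> variance ?S / (\<epsilon> * real k)\<^sup>2"
    using Chebyshev_inequality[of ?S "\<epsilon> * real k"] assms by simp
  also have "\<dots> \<le> real k * expectation (\<lambda>\<omega>. (trunc_at (real k) (Z 0 \<omega>))\<^sup>2) / (\<epsilon> * real k)\<^sup>2"
    by (intro divide_right_mono variance_sum_truncated_le) simp
  also have "\<dots> = expectation (\<lambda>\<omega>. (trunc_at (real k) (Z 0 \<omega>))\<^sup>2) / (\<epsilon>\<^sup>2 * real k)"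
    using assms by (simp add: power2_eq_square)
  finally show ?thesis .
qed

lemma summable_truncated_second_moment_floor_pow:
  assumes a: "a > 1"
  shows "summable (\<lambda>m. expectation (\<lambda>\<omega>. (trunc_at (real (floor_pow a m)) (Z 0 \<omega>))\<^sup>2)
           / real (floor_pow a m))"
proof -
  define g where "g m \<omega> = (trunc_at (real (floor_pow a m)) (Z 0 \<omega>))\<^sup>2 / real (floor_pow a m)"
    for m \<omega>
  have g_eq: "g m \<omega> = (if Z 0 \<omega> \<le> real (floor_pow a m)
      then (Z 0 \<omega>)\<^sup>2 / real (floor_pow a m) else 0)" for m \<omega>
    unfolding g_def trunc_at_def by simp
  have g_nonneg: "0 \<le> g m \<omega>" for m \<omega> unfolding g_def by simp
  have g_int: "integrable M (g m)" for m
    unfolding g_def by (intro integrable_divide integrable_trunc_at_Z0) simp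
  have "(\<Sum>m. ennreal (expectation (g m))) = (\<Sum>m. \<integral>\<^sup>+\<omega>. ennreal (g m \<omega>) \<partial>M)"
    by (intro suminf_cong nn_integral_eq_integral[symmetric] g_int AE_I2 g_nonneg)
  also have "\<dots> = (\<integral>\<^sup>+\<omega>. (\<Sum>m. ennreal (g m \<omega>)) \<partial>M)"
    by (rule nn_integral_suminf[symmetric]) (simp add: g_def)
  also have "\<dots> \<le> (\<integral>\<^sup>+\<omega>. ennreal (2 * a / (a - 1) * Z 0 \<omega>) \<partial>M)"
    unfolding g_eq using suminf_floor_pow_sq_le[OF a Z_nonneg] by (intro nn_integral_mono) simp
  also have "\<dots> = ennreal (expectation (\<lambda>\<omega>. 2 * a / (a - 1) * Z 0 \<omega>))"
    using a Z_integrable Z_nonneg by (intro nn_integral_eq_integral) auto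
  also have "\<dots> < top" by simp
  finally have "(\<Sum>m. ennreal (expectation (g m))) \<noteq> top" by simp
  then have "summable (\<lambda>m. expectation (g m))"
    by (rule summable_suminf_not_top[rotated]) (simp add: g_nonneg)
  then show ?thesis unfolding g_def by simp
qed

lemma AE_eventually_truncated_sum_close:
  assumes a: "a > 1" and \<epsilon>: "\<epsilon> > 0"
  shows "AE \<omega> in M. \<forall>\<^sub>F m in sequentially.
           \<bar>(\<Sum>i<floor_pow a m. truncated i \<omega>) - (\<Sum>i<floor_pow a m. expectation (truncated i))\<bar>
             < \<epsilon> * real (floor_pow a m)"
proof -
  define B where "B m = {\<omega>\<in>space M. \<epsilon> * real (floor_pow a m)
      \<le> \<bar>(\<Sum>i<floor_pow a m. truncated i \<omega>) - (\<Sum>i<floor_pow a m. expectation (truncated i))\<bar>}" for m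
  have [measurable]: "B m \<in> sets M" for m unfolding B_def by measurable
  have summable_bound: "summable (\<lambda>m. expectation (\<lambda>\<omega>. (trunc_at (real (floor_pow a m)) (Z 0 \<omega>))\<^sup>2)
      / real (floor_pow a m) / \<epsilon>\<^sup>2)"
    by (intro summable_divide summable_truncated_second_moment_floor_pow a)
  have prob_B: "prob (B m) \<le> expectation (\<lambda>\<omega>. (trunc_at (real (floor_pow a m)) (Z 0 \<omega>))\<^sup>2)
      / real (floor_pow a m) / \<epsilon>\<^sup>2" for m
    using prob_truncated_sum_deviation_le[OF \<epsilon> floor_pow_pos[of a m]] a
    unfolding B_def by (simp add: mult.commute)
  have "summable (\<lambda>m. prob (B m))"
    by (rule summable_comparison_test'[OF summable_bound, of 0]) (use prob_B in simp)
  then have "AE \<omega> in M. \<forall>\<^sub>F m in sequentially. \<omega> \<in> space M - B m"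
    by (intro borel_cantelli_AE1) (auto simp: emeasure_eq_measure)
  then show ?thesis
    by (rule AE_mp) (auto elim!: eventually_mono simp: B_def not_le)
qed

lemma AE_tendsto_truncated_mean_floor_pow:
  assumes a: "a > 1"
  shows "AE \<omega> in M. (\<lambda>m. (\<Sum>i<floor_pow a m. truncated i \<omega>) / real (floor_pow a m))
           \<longlonglongrightarrow> expectation (Z 0)"
proof -
  let ?k = "\<lambda>m. real (floor_pow a m)"
  have k_pos: "?k m > 0" for m using floor_pow_pos[of a m] a by simp
  have "AE \<omega> in M. \<forall>j. \<forall>\<^sub>F m in sequentially.
      \<bar>(\<Sum>i<floor_pow a m. truncated i \<omega>) - (\<Sum>i<floor_pow a m. expectation (truncated i))\<bar>
        < 1 / real (Suc j) * ?k m"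
    unfolding AE_all_countable by (intro allI AE_eventually_truncated_sum_close a) simp
  then show ?thesis
  proof (rule AE_mp, intro AE_I2 impI)
    fix \<omega>
    assume close: "\<forall>j. \<forall>\<^sub>F m in sequentially.
      \<bar>(\<Sum>i<floor_pow a m. truncated i \<omega>) - (\<Sum>i<floor_pow a m. expectation (truncated i))\<bar>
        < 1 / real (Suc j) * ?k m"
    have "(\<lambda>m. (\<Sum>i<floor_pow a m. truncated i \<omega>) / ?k m
        - (\<Sum>i<floor_pow a m. expectation (truncated i)) / ?k m) \<longlonglongrightarrow> 0"
    proof (rule tendsto_zero_if_eventually_less_inverse_Suc)
      fix j
      show "\<forall>\<^sub>F m in sequentially. \<bar>(\<Sum>i<floor_pow a m. truncated i \<omega>) / ?k m
          - (\<Sum>i<floor_pow a m. expectation (truncated i)) / ?k m\<bar> < 1 / real (Suc j)"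
        using close[rule_format, of j]
        by eventually_elim (use k_pos in \<open>simp add: diff_divide_distrib[symmetric] divide_less_eq\<close>)
    qed
    moreover have "(\<lambda>m. (\<Sum>i<floor_pow a m. expectation (truncated i)) / ?k m) \<longlonglongrightarrow> expectation (Z 0)"
      using filterlim_compose[OF tendsto_mean_expectation_truncated filterlim_floor_pow_at_top[OF a]]
      by (simp add: o_def)
    ultimately show "(\<lambda>m. (\<Sum>i<floor_pow a m. truncated i \<omega>) / ?k m) \<longlonglongrightarrow> expectation (Z 0)"
      using tendsto_add by fastforce
  qed
qed

theorem strong_law_of_large_numbers:
  "AE \<omega> in M. (\<lambda>n. 1 / real n * (\<Sum>i<n. Z i \<omega>)) \<longlonglongrightarrow> expectation (Z 0)"
proof -
  have "AE \<omega> in M. \<forall>r. (\<lambda>m. (\<Sum>i<floor_pow (1 + 1 / Suc r) m. truncated i \<omega>)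
      / real (floor_pow (1 + 1 / Suc r) m)) \<longlonglongrightarrow> expectation (Z 0)"
    unfolding AE_all_countable by (intro allI AE_tendsto_truncated_mean_floor_pow) simp
  with AE_eventually_Z_le_index show ?thesis
  proof (eventually_elim)
    case (elim \<omega>)
    define s where "s n = (\<Sum>i<n. truncated i \<omega>)" for n
    have "(\<lambda>n. s n / real n) \<longlonglongrightarrow> expectation (Z 0)"
    proof (rule mono_mean_tendsto_from_floor_pow)
      show "mono s" unfolding s_def by (intro monoI sum_mono2) (auto simp: truncated_nonneg)
      show "expectation (Z 0) \<ge> 0" using Z_nonneg by simp
    qed (use elim(2) in \<open>simp_all add: s_def sum_nonneg truncated_nonneg\<close>)
    moreover have "(\<lambda>n. (\<Sum>i<n. Z i \<omega> - truncated i \<omega>) / real n) \<longlonglongrightarrow> 0"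
    proof (rule cesaro_mean_tendsto)
      show "(\<lambda>i. Z i \<omega> - truncated i \<omega>) \<longlonglongrightarrow> 0"
        using elim(1)
        by (rule tendsto_eventually[OF eventually_mono]) (simp add: truncated_def trunc_at_def)
    qed
    ultimately have "(\<lambda>n. s n / real n + (\<Sum>i<n. Z i \<omega> - truncated i \<omega>) / real n)
        \<longlonglongrightarrow> expectation (Z 0) + 0"
      by (rule tendsto_add)
    then show ?case
      by (simp add: s_def sum_subtractf add_divide_distrib[symmetric])
  qed
qed

end

section \<open>The max-term and its Lipschitz bound\<close>

lemma abs_max_diff_le: "\<bar>max (a::real) b - max a' b'\<bar> \<le> max \<bar>a - a'\<bar> \<bar>b - b'\<bar>"
  by (simp add: max_def abs_if)

lemma maxterm_0: "maxterm 0 x v = \<bar>x 0\<bar>"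
  unfolding maxterm_def by simp

lemma maxterm_Suc: "maxterm (Suc d) x v = max (maxterm d x v) (\<bar>x (Suc d)\<bar> * v (Suc d))"
proof -
  have "{1..Suc d} = insert (Suc d) {1..d}" by auto
  then have "insert \<bar>x 0\<bar> ((\<lambda>j. \<bar>x j\<bar> * v j) ` {1..Suc d})
      = insert (\<bar>x (Suc d)\<bar> * v (Suc d)) (insert \<bar>x 0\<bar> ((\<lambda>j. \<bar>x j\<bar> * v j) ` {1..d}))"
    by auto
  then show ?thesis unfolding maxterm_def by (simp add: max.commute)
qed

lemma maxterm_nonneg: "0 \<le> maxterm d x v"
proof -
  have "\<bar>x 0\<bar> \<le> maxterm d x v" unfolding maxterm_def by (rule Max_ge) auto
  then show ?thesis by linarith
qed

lemma maxterm_zero: "maxterm d (\<lambda>_. 0) v = 0"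
  by (induction d) (simp_all add: maxterm_0 maxterm_Suc)

definition lipschitz_weight :: "nat \<Rightarrow> (nat \<Rightarrow> real) \<Rightarrow> real" where
  "lipschitz_weight d v = 1 + (\<Sum>j\<in>{1..d}. \<bar>v j\<bar>)"

lemma lipschitz_weight_nonneg: "0 \<le> lipschitz_weight d v"
  unfolding lipschitz_weight_def by (simp add: sum_nonneg)

lemma maxterm_restrict: "maxterm d x (restrict v {1..d}) = maxterm d x v"
  unfolding maxterm_def by (intro arg_cong[where f=Max] arg_cong2[where f=insert] image_cong) auto

lemma lipschitz_weight_restrict: "lipschitz_weight d (restrict v {1..d}) = lipschitz_weight d v"
  unfolding lipschitz_weight_def by simp

lemma maxterm_lipschitz:
  assumes "\<And>k. k \<le> d \<Longrightarrow> \<bar>x k - y k\<bar> \<le> \<delta>"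
  shows "\<bar>maxterm d x v - maxterm d y v\<bar> \<le> \<delta> * lipschitz_weight d v"
  using assms
proof (induction d)
  case 0
  then show ?case using 0[of 0] by (simp add: maxterm_0 lipschitz_weight_def)
next
  case (Suc d)
  have \<delta>: "\<delta> \<ge> 0" using Suc.prems[of 0] by linarith
  have IH: "\<bar>maxterm d x v - maxterm d y v\<bar> \<le> \<delta> * lipschitz_weight d v"
    using Suc by simp
  have "\<bar>\<bar>x (Suc d)\<bar> * v (Suc d) - \<bar>y (Suc d)\<bar> * v (Suc d)\<bar>
      = \<bar>\<bar>x (Suc d)\<bar> - \<bar>y (Suc d)\<bar>\<bar> * \<bar>v (Suc d)\<bar>"
    by (simp add: left_diff_distrib[symmetric] abs_mult)
  also have "\<dots> \<le> \<delta> * \<bar>v (Suc d)\<bar>"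
    using Suc.prems[of "Suc d"] by (intro mult_right_mono) auto
  finally have last: "\<bar>\<bar>x (Suc d)\<bar> * v (Suc d) - \<bar>y (Suc d)\<bar> * v (Suc d)\<bar> \<le> \<delta> * \<bar>v (Suc d)\<bar>" .
  have weight_Suc: "lipschitz_weight (Suc d) v = lipschitz_weight d v + \<bar>v (Suc d)\<bar>"
    unfolding lipschitz_weight_def by simp
  have "\<bar>maxterm (Suc d) x v - maxterm (Suc d) y v\<bar>
      \<le> max \<bar>maxterm d x v - maxterm d y v\<bar> \<bar>\<bar>x (Suc d)\<bar> * v (Suc d) - \<bar>y (Suc d)\<bar> * v (Suc d)\<bar>"
    unfolding maxterm_Suc by (rule abs_max_diff_le)
  also have "\<dots> \<le> \<delta> * lipschitz_weight (Suc d) v"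
    unfolding weight_Suc using IH last \<delta> lipschitz_weight_nonneg[of d v]
    by (intro max.boundedI) (simp_all add: distrib_left add_increasing add_increasing2)
  finally show ?case .
qed

lemma maxterm_measurable:
  assumes "d' \<le> d"
  shows "(\<lambda>v. maxterm d' x v) \<in> borel_measurable (PiM {1..d} (\<lambda>_. borel))"
  using assms
proof (induction d')
  case (Suc d')
  have [measurable]: "(\<lambda>v. maxterm d' x v) \<in> borel_measurable (PiM {1..d} (\<lambda>_. borel))"
    using Suc by simp
  have [measurable]: "(\<lambda>v. v (Suc d')) \<in> borel_measurable (PiM {1..d} (\<lambda>_. borel))"
    using Suc.prems by (intro measurable_component_singleton) auto
  show ?case unfolding maxterm_Suc by measurable
qed (simp add: maxterm_0[abs_def])

lemma emp_norm_lipschitz: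
  assumes "\<And>k. k \<le> d \<Longrightarrow> \<bar>x k - y k\<bar> \<le> \<delta>"
  shows "\<bar>emp_norm Y d n x \<omega> - emp_norm Y d n y \<omega>\<bar>
          \<le> \<delta> * (1 / real n * (\<Sum>i<n. lipschitz_weight d (\<lambda>j. Y i j \<omega>)))"
proof -
  have "emp_norm Y d n x \<omega> - emp_norm Y d n y \<omega>
      = 1 / real n * (\<Sum>i<n. maxterm d x (\<lambda>j. Y i j \<omega>) - maxterm d y (\<lambda>j. Y i j \<omega>))"
    unfolding emp_norm_def by (simp add: sum_subtractf right_diff_distrib)
  then have "\<bar>emp_norm Y d n x \<omega> - emp_norm Y d n y \<omega>\<bar>
      = 1 / real n * \<bar>\<Sum>i<n. maxterm d x (\<lambda>j. Y i j \<omega>) - maxterm d y (\<lambda>j. Y i j \<omega>)\<bar>"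
    by (simp only: abs_mult abs_of_nonneg[of "1 / real n"] divide_nonneg_nonneg
        of_nat_0_le_iff zero_le_one)
  also have "\<dots> \<le> 1 / real n * (\<Sum>i<n. \<delta> * lipschitz_weight d (\<lambda>j. Y i j \<omega>))"
    by (intro mult_left_mono order_trans[OF sum_abs] sum_mono maxterm_lipschitz assms) auto
  finally show ?thesis by (simp add: sum_distrib_left)
qed

section \<open>Uniform convergence on the box\<close>

lemma (in prob_space) indep_vars_imp_indep_var:
  assumes "indep_vars M' X I" and "i \<in> I" "j \<in> I" "i \<noteq> j"
  shows "indep_var (M' i) (X i) (M' j) (X j)"
proof -
  have "indep_var (PiM {i} M') (\<lambda>\<omega>. restrict (\<lambda>k. X k \<omega>) {i})
      (PiM {j} M') (\<lambda>\<omega>. restrict (\<lambda>k. X k \<omega>) {j})"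
    using assms by (intro indep_var_restrict) auto
  then have "indep_var (M' i) ((\<lambda>f. f i) \<circ> (\<lambda>\<omega>. restrict (\<lambda>k. X k \<omega>) {i}))
      (M' j) ((\<lambda>f. f j) \<circ> (\<lambda>\<omega>. restrict (\<lambda>k. X k \<omega>) {j}))"
    by (rule indep_var_compose) (auto intro: measurable_component_singleton)
  then show ?thesis by (simp add: o_def)
qed

locale iid_random_vectors = prob_space +
  fixes d :: nat and X :: "nat \<Rightarrow> 'a \<Rightarrow> real" and Y :: "nat \<Rightarrow> nat \<Rightarrow> 'a \<Rightarrow> real"
  assumes X_integrable: "\<And>j. j \<in> {1..d} \<Longrightarrow> integrable M (X j)"
    and Y_measurable: "\<And>i j. j \<in> {1..d} \<Longrightarrow> Y i j \<in> borel_measurable M"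
    and Y_indep: "indep_vars (\<lambda>_. PiM {1..d} (\<lambda>_. borel)) (\<lambda>i \<omega>. \<lambda>j\<in>{1..d}. Y i j \<omega>) UNIV"
    and Y_distr: "\<And>i. distr M (PiM {1..d} (\<lambda>_. borel)) (\<lambda>\<omega>. \<lambda>j\<in>{1..d}. Y i j \<omega>)
                     = distr M (PiM {1..d} (\<lambda>_. borel)) (\<lambda>\<omega>. \<lambda>j\<in>{1..d}. X j \<omega>)"
begin

abbreviation vec_space :: "(nat \<Rightarrow> real) measure" where
  "vec_space \<equiv> PiM {1..d} (\<lambda>_. borel)"

abbreviation X_vec :: "'a \<Rightarrow> nat \<Rightarrow> real" where
  "X_vec \<omega> \<equiv> \<lambda>j\<in>{1..d}. X j \<omega>"

abbreviation Y_vec :: "nat \<Rightarrow> 'a \<Rightarrow> nat \<Rightarrow> real" where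
  "Y_vec i \<omega> \<equiv> \<lambda>j\<in>{1..d}. Y i j \<omega>"

lemma X_measurable: "j \<in> {1..d} \<Longrightarrow> X j \<in> borel_measurable M"
  using X_integrable by blast

lemma X_vec_measurable: "X_vec \<in> M \<rightarrow>\<^sub>M vec_space"
  by (intro measurable_restrict X_measurable)

lemma Y_vec_measurable: "Y_vec i \<in> M \<rightarrow>\<^sub>M vec_space"
  by (intro measurable_restrict Y_measurable)

lemma integral_Y_vec:
  fixes f :: "(nat \<Rightarrow> real) \<Rightarrow> real"
  assumes "f \<in> borel_measurable vec_space"
  shows "(\<integral>\<omega>. f (Y_vec i \<omega>) \<partial>M) = (\<integral>\<omega>. f (X_vec \<omega>) \<partial>M)"
proof -
  have "(\<integral>\<omega>. f (Y_vec i \<omega>) \<partial>M) = integral\<^sup>L (distr M vec_space (Y_vec i)) f"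
    by (rule integral_distr[OF Y_vec_measurable assms, symmetric])
  also have "\<dots> = integral\<^sup>L (distr M vec_space X_vec) f" by (simp only: Y_distr)
  also have "\<dots> = (\<integral>\<omega>. f (X_vec \<omega>) \<partial>M)"
    by (rule integral_distr[OF X_vec_measurable assms])
  finally show ?thesis .
qed

lemma integrable_Y_vec_iff:
  fixes f :: "(nat \<Rightarrow> real) \<Rightarrow> real"
  assumes "f \<in> borel_measurable vec_space"
  shows "integrable M (\<lambda>\<omega>. f (Y_vec i \<omega>)) \<longleftrightarrow> integrable M (\<lambda>\<omega>. f (X_vec \<omega>))"
proof -
  have "integrable M (\<lambda>\<omega>. f (Y_vec i \<omega>)) \<longleftrightarrow> integrable (distr M vec_space (Y_vec i)) f"
    by (rule integrable_distr_eq[OF Y_vec_measurable assms, symmetric])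
  also have "\<dots> \<longleftrightarrow> integrable (distr M vec_space X_vec) f" by (simp only: Y_distr)
  also have "\<dots> \<longleftrightarrow> integrable M (\<lambda>\<omega>. f (X_vec \<omega>))"
    by (rule integrable_distr_eq[OF X_vec_measurable assms])
  finally show ?thesis .
qed

lemma AE_tendsto_sample_mean:
  fixes \<phi> :: "(nat \<Rightarrow> real) \<Rightarrow> real"
  assumes \<phi>_measurable: "\<phi> \<in> borel_measurable vec_space"
    and \<phi>_nonneg: "\<And>v. 0 \<le> \<phi> v"
    and \<phi>_integrable: "integrable M (\<lambda>\<omega>. \<phi> (X_vec \<omega>))"
  shows "AE \<omega> in M. (\<lambda>n. 1 / real n * (\<Sum>i<n. \<phi> (Y_vec i \<omega>))) \<longlonglongrightarrow> (\<integral>\<omega>. \<phi> (X_vec \<omega>) \<partial>M)"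
proof -
  interpret sample: pairwise_iid_nonneg M "\<lambda>i \<omega>. \<phi> (Y_vec i \<omega>)"
  proof
    show "(\<lambda>\<omega>. \<phi> (Y_vec i \<omega>)) \<in> borel_measurable M" for i
      using Y_vec_measurable \<phi>_measurable by measurable
    have indep: "indep_vars (\<lambda>_. borel) (\<lambda>i \<omega>. \<phi> (Y_vec i \<omega>)) UNIV"
      by (rule indep_vars_compose2[OF Y_indep \<phi>_measurable])
    show "indep_var borel (\<lambda>\<omega>. \<phi> (Y_vec i \<omega>)) borel (\<lambda>\<omega>. \<phi> (Y_vec j \<omega>))" if "i \<noteq> j" for i j
      by (rule indep_vars_imp_indep_var[OF indep]) (use that in auto)
    have "distr M borel (\<lambda>\<omega>. \<phi> (Y_vec i \<omega>)) = distr (distr M vec_space (Y_vec i)) borel \<phi>" for i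
      using distr_distr[OF \<phi>_measurable Y_vec_measurable] by (simp add: o_def)
    then show "distr M borel (\<lambda>\<omega>. \<phi> (Y_vec i \<omega>)) = distr M borel (\<lambda>\<omega>. \<phi> (Y_vec 0 \<omega>))" for i
      by (simp only: Y_distr)
    show "0 \<le> \<phi> (Y_vec i \<omega>)" for i \<omega> by (rule \<phi>_nonneg)
    show "integrable M (\<lambda>\<omega>. \<phi> (Y_vec 0 \<omega>))"
      using \<phi>_integrable integrable_Y_vec_iff[OF \<phi>_measurable] by simp
  qed
  show ?thesis
    using sample.strong_law_of_large_numbers integral_Y_vec[OF \<phi>_measurable, of 0] by simp
qed

lemma integrable_lipschitz_weight: "integrable M (\<lambda>\<omega>. lipschitz_weight d (\<lambda>j. X j \<omega>))"
  unfolding lipschitz_weight_def using X_integrable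
  by (intro Bochner_Integration.integrable_add Bochner_Integration.integrable_sum
      Bochner_Integration.integrable_abs) auto

lemma integrable_maxterm: "integrable M (\<lambda>\<omega>. maxterm d x (\<lambda>j. X j \<omega>))"
proof (rule Bochner_Integration.integrable_bound
    [OF integrable_mult_right[OF integrable_lipschitz_weight]])
  define c where "c = (\<Sum>k\<le>d. \<bar>x k\<bar>)"
  have "\<bar>maxterm d x v - maxterm d (\<lambda>_. 0) v\<bar> \<le> c * lipschitz_weight d v" for v
    unfolding c_def by (intro maxterm_lipschitz) (auto intro: member_le_sum)
  then show "AE \<omega> in M. norm (maxterm d x (\<lambda>j. X j \<omega>)) \<le> norm (c * lipschitz_weight d (\<lambda>j. X j \<omega>))"
    using lipschitz_weight_nonneg sum_nonneg[of "{..d}" "\<lambda>k. \<bar>x k\<bar>"]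
    by (intro AE_I2) (simp add: maxterm_zero maxterm_nonneg abs_mult c_def)
  have "(\<lambda>\<omega>. maxterm d x (X_vec \<omega>)) \<in> borel_measurable M"
    by (intro measurable_compose[OF X_vec_measurable maxterm_measurable]) simp
  then show "(\<lambda>\<omega>. maxterm d x (\<lambda>j. X j \<omega>)) \<in> borel_measurable M"
    by (simp only: maxterm_restrict)
qed

lemma AE_tendsto_emp_norm: "AE \<omega> in M. (\<lambda>n. emp_norm Y d n x \<omega>) \<longlonglongrightarrow> F_norm M X d x"
proof -
  have "integrable M (\<lambda>\<omega>. maxterm d x (X_vec \<omega>))"
    using integrable_maxterm unfolding maxterm_restrict .
  from AE_tendsto_sample_mean[OF maxterm_measurable[OF order_refl] maxterm_nonneg this]
  show ?thesis unfolding maxterm_restrict emp_norm_def F_norm_def .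
qed

lemma AE_tendsto_mean_lipschitz_weight:
  "AE \<omega> in M. (\<lambda>n. 1 / real n * (\<Sum>i<n. lipschitz_weight d (\<lambda>j. Y i j \<omega>)))
     \<longlonglongrightarrow> (\<integral>\<omega>. lipschitz_weight d (\<lambda>j. X j \<omega>) \<partial>M)"
proof -
  have "lipschitz_weight d \<in> borel_measurable vec_space"
    unfolding lipschitz_weight_def[abs_def] by measurable
  moreover have "integrable M (\<lambda>\<omega>. lipschitz_weight d (X_vec \<omega>))"
    using integrable_lipschitz_weight unfolding lipschitz_weight_restrict .
  ultimately show ?thesis
    using AE_tendsto_sample_mean[where \<phi>="lipschitz_weight d", OF _ lipschitz_weight_nonneg]
    unfolding lipschitz_weight_restrict by blast
qed

lemma F_norm_lipschitz:
  assumes "\<And>k. k \<le> d \<Longrightarrow> \<bar>x k - y k\<bar> \<le> \<delta>"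
  shows "\<bar>F_norm M X d x - F_norm M X d y\<bar> \<le> \<delta> * (\<integral>\<omega>. lipschitz_weight d (\<lambda>j. X j \<omega>) \<partial>M)"
proof -
  have "\<bar>F_norm M X d x - F_norm M X d y\<bar>
      = \<bar>\<integral>\<omega>. maxterm d x (\<lambda>j. X j \<omega>) - maxterm d y (\<lambda>j. X j \<omega>) \<partial>M\<bar>"
    unfolding F_norm_def using integrable_maxterm by simp
  also have "\<dots> \<le> (\<integral>\<omega>. \<bar>maxterm d x (\<lambda>j. X j \<omega>) - maxterm d y (\<lambda>j. X j \<omega>)\<bar> \<partial>M)"
    by (rule integral_abs_bound)
  also have "\<dots> \<le> (\<integral>\<omega>. \<delta> * lipschitz_weight d (\<lambda>j. X j \<omega>) \<partial>M)"
    using integrable_maxterm integrable_lipschitz_weight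
    by (intro Bochner_Integration.integral_mono maxterm_lipschitz assms) auto
  finally show ?thesis by simp
qed

end

lemma tendsto_Sup_abs_diff_from_nets:
  fixes f :: "nat \<Rightarrow> (nat \<Rightarrow> real) \<Rightarrow> real" and g :: "(nat \<Rightarrow> real) \<Rightarrow> real"
    and G :: "nat \<Rightarrow> (nat \<Rightarrow> real) set"
  assumes "S \<noteq> {}"
    and G_finite: "\<And>N. finite (G N)"
    and G_net: "\<And>N x. x \<in> S \<Longrightarrow> \<exists>y\<in>G N. \<forall>k\<le>d. \<bar>x k - y k\<bar> \<le> 1 / real (Suc N)"
    and f_lip: "\<And>n x y \<delta>. (\<And>k. k \<le> d \<Longrightarrow> \<bar>x k - y k\<bar> \<le> \<delta>) \<Longrightarrow> \<bar>f n x - f n y\<bar> \<le> \<delta> * L n"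
    and g_lip: "\<And>x y \<delta>. (\<And>k. k \<le> d \<Longrightarrow> \<bar>x k - y k\<bar> \<le> \<delta>) \<Longrightarrow> \<bar>g x - g y\<bar> \<le> \<delta> * L'"
    and L: "L \<longlonglongrightarrow> L'"
    and conv: "\<And>N y. y \<in> G N \<Longrightarrow> (\<lambda>n. f n y) \<longlonglongrightarrow> g y"
  shows "(\<lambda>n. SUP x\<in>S. \<bar>f n x - g x\<bar>) \<longlonglongrightarrow> 0"
proof (rule LIMSEQ_I)
  fix \<epsilon> :: real assume \<epsilon>: "\<epsilon> > 0"
  obtain N :: nat where "2 * (2 * L' + 1) / \<epsilon> < N" using reals_Archimedean2 by blast
  then have N: "(2 * L' + 1) / real (Suc N) < \<epsilon> / 2" using \<epsilon> by (simp add: field_simps)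
  have "\<forall>\<^sub>F n in sequentially. L n < L' + 1"
    using order_tendstoD(2)[OF L] by simp
  moreover have "\<forall>\<^sub>F n in sequentially. \<forall>y\<in>G N. \<bar>f n y - g y\<bar> < \<epsilon> / 2"
  proof (intro eventually_ball_finite ballI G_finite)
    fix y assume "y \<in> G N"
    from tendstoD[OF conv[OF this], of "\<epsilon> / 2"] \<epsilon>
    show "\<forall>\<^sub>F n in sequentially. \<bar>f n y - g y\<bar> < \<epsilon> / 2" by (simp add: dist_real_def)
  qed
  ultimately have "\<forall>\<^sub>F n in sequentially. norm ((SUP x\<in>S. \<bar>f n x - g x\<bar>) - 0) < \<epsilon>"
  proof eventually_elim
    case (elim n)
    have bound: "\<bar>f n x - g x\<bar> \<le> \<epsilon> / 2 + (2 * L' + 1) / real (Suc N)" if x: "x \<in> S" for x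
    proof -
      obtain y where "y \<in> G N" and y: "\<And>k. k \<le> d \<Longrightarrow> \<bar>x k - y k\<bar> \<le> 1 / real (Suc N)"
        using G_net[OF x] by blast
      have "\<bar>f n x - f n y\<bar> \<le> 1 / real (Suc N) * L n" by (rule f_lip) (rule y)
      moreover have "\<bar>g x - g y\<bar> \<le> 1 / real (Suc N) * L'" by (rule g_lip) (rule y)
      moreover have "\<bar>f n y - g y\<bar> < \<epsilon> / 2" using elim \<open>y \<in> G N\<close> by blast
      ultimately have "\<bar>f n x - g x\<bar> \<le> \<epsilon> / 2 + 1 / real (Suc N) * (L n + L')"
        unfolding distrib_left by linarith
      also have "\<dots> \<le> \<epsilon> / 2 + (2 * L' + 1) / real (Suc N)"
        using elim by (simp add: divide_right_mono)
      finally show ?thesis .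
    qed
    have Sup_nonneg: "0 \<le> (SUP x\<in>S. \<bar>f n x - g x\<bar>)"
      using \<open>S \<noteq> {}\<close> bound by (meson abs_ge_zero bdd_aboveI2 cSUP_upper2 ex_in_conv)
    have "(SUP x\<in>S. \<bar>f n x - g x\<bar>) \<le> \<epsilon> / 2 + (2 * L' + 1) / real (Suc N)"
      using \<open>S \<noteq> {}\<close> bound by (intro cSUP_least) auto
    then have "(SUP x\<in>S. \<bar>f n x - g x\<bar>) < \<epsilon>" using N by linarith
    then show ?case using Sup_nonneg by simp
  qed
  then show "\<exists>no. \<forall>n\<ge>no. norm ((SUP x\<in>S. \<bar>f n x - g x\<bar>) - 0) < \<epsilon>"
    unfolding eventually_sequentially .
qed

lemma box_finite_net:
  fixes x0 :: "nat \<Rightarrow> real"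
  assumes "\<delta> > 0"
  shows "\<exists>G. finite G \<and> (\<forall>x\<in>{x. \<forall>k\<in>{0..d}. 0 \<le> x k \<and> x k \<le> x0 k}.
           \<exists>y\<in>G. \<forall>k\<le>d. \<bar>x k - y k\<bar> \<le> \<delta>)"
proof (intro exI conjI ballI)
  define grid where "grid = PiE {0..d} (\<lambda>k. {0..nat \<lceil>x0 k / \<delta>\<rceil>})"
  show "finite ((\<lambda>m k. real (m k) * \<delta>) ` grid)"
    unfolding grid_def by (simp add: finite_PiE)
  fix x assume "x \<in> {x. \<forall>k\<in>{0..d}. 0 \<le> x k \<and> x k \<le> x0 k}"
  then have x: "\<forall>k\<in>{0..d}. 0 \<le> x k \<and> x k \<le> x0 k" by simp
  define m where "m = restrict (\<lambda>k. nat \<lfloor>x k / \<delta>\<rfloor>) {0..d}"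
  have "nat \<lfloor>x k / \<delta>\<rfloor> \<le> nat \<lceil>x0 k / \<delta>\<rceil>" if "k \<in> {0..d}" for k
  proof -
    have "x k / \<delta> \<le> x0 k / \<delta>" using x that assms by (simp add: divide_right_mono)
    then show ?thesis by (intro nat_mono order_trans[OF floor_mono floor_le_ceiling])
  qed
  then have "m \<in> grid" unfolding m_def grid_def by auto
  moreover have "\<bar>x k - real (m k) * \<delta>\<bar> \<le> \<delta>" if "k \<le> d" for k
  proof -
    let ?q = "x k / \<delta>"
    have "0 \<le> ?q" using x that assms by simp
    then have "x k - real (m k) * \<delta> = (?q - of_int \<lfloor>?q\<rfloor>) * \<delta>"
      using that assms by (simp add: m_def algebra_simps)
    moreover have frac: "0 \<le> ?q - of_int \<lfloor>?q\<rfloor>" "?q - of_int \<lfloor>?q\<rfloor> \<le> 1" by linarith+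
    ultimately have "\<bar>x k - real (m k) * \<delta>\<bar> = (?q - of_int \<lfloor>?q\<rfloor>) * \<delta>"
      using assms by (simp add: abs_mult)
    also have "\<dots> \<le> \<delta>" using frac assms by (intro mult_left_le_one_le) auto
    finally show ?thesis .
  qed
  ultimately show "\<exists>y\<in>(\<lambda>m k. real (m k) * \<delta>) ` grid. \<forall>k\<le>d. \<bar>x k - y k\<bar> \<le> \<delta>"
    by (intro bexI[of _ "\<lambda>k. real (m k) * \<delta>"] imageI) auto
qed

theorem theorem3p3:
  fixes M :: "'a measure" and d :: nat
    and X :: "nat \<Rightarrow> 'a \<Rightarrow> real"
    and Y :: "nat \<Rightarrow> nat \<Rightarrow> 'a \<Rightarrow> real"
    and x0 :: "nat \<Rightarrow> real"
  assumes P: "prob_space M"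
    and H_nonneg: "\<And>j. j \<in> {1..d} \<Longrightarrow> AE \<omega> in M. X j \<omega> \<ge> 0"
    and H_int: "\<And>j. j \<in> {1..d} \<Longrightarrow> integrable M (X j)"
    and H_pos: "\<And>j. j \<in> {1..d} \<Longrightarrow> (\<integral>\<omega>. X j \<omega> \<partial>M) > 0"
    and Y_meas: "\<And>i j. j \<in> {1..d} \<Longrightarrow> Y i j \<in> borel_measurable M"
    and Y_indep: "prob_space.indep_vars M (\<lambda>_. PiM {1..d} (\<lambda>_. borel))
                    (\<lambda>i \<omega>. \<lambda>j\<in>{1..d}. Y i j \<omega>) UNIV"
    and Y_distr: "\<And>i. distr M (PiM {1..d} (\<lambda>_. borel)) (\<lambda>\<omega>. \<lambda>j\<in>{1..d}. Y i j \<omega>)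
                     = distr M (PiM {1..d} (\<lambda>_. borel)) (\<lambda>\<omega>. \<lambda>j\<in>{1..d}. X j \<omega>)"
    and x0_nonneg: "\<And>k. k \<in> {0..d} \<Longrightarrow> x0 k \<ge> 0"
  shows "AE \<omega> in M.
           (\<lambda>n. SUP x\<in>{x. \<forall>k\<in>{0..d}. 0 \<le> x k \<and> x k \<le> x0 k}.
                   \<bar>emp_norm Y d n x \<omega> - F_norm M X d x\<bar>) \<longlonglongrightarrow> 0"
proof -
  interpret iid_random_vectors M d X Y
    by (intro iid_random_vectors.intro[OF P] iid_random_vectors_axioms.intro
        H_int Y_meas Y_indep Y_distr)
  let ?box = "{x. \<forall>k\<in>{0..d}. 0 \<le> x k \<and> x k \<le> x0 k}"
  have "\<forall>N. \<exists>G. finite G \<and> (\<forall>x\<in>?box. \<exists>y\<in>G. \<forall>k\<le>d. \<bar>x k - y k\<bar> \<le> 1 / real (Suc N))"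
    by (intro allI box_finite_net) simp
  then obtain G where
    G: "\<forall>N. finite (G N) \<and> (\<forall>x\<in>?box. \<exists>y\<in>G N. \<forall>k\<le>d. \<bar>x k - y k\<bar> \<le> 1 / real (Suc N))"
    unfolding choice_iff by blast
  then have G_finite: "\<And>N. finite (G N)"
    and G_net: "\<And>N x. x \<in> ?box \<Longrightarrow> \<exists>y\<in>G N. \<forall>k\<le>d. \<bar>x k - y k\<bar> \<le> 1 / real (Suc N)"
    by blast+
  have "AE \<omega> in M. \<forall>N. \<forall>y\<in>G N. (\<lambda>n. emp_norm Y d n y \<omega>) \<longlonglongrightarrow> F_norm M X d y"
    unfolding AE_all_countable using G_finite by (intro allI AE_finite_allI AE_tendsto_emp_norm)
  with AE_tendsto_mean_lipschitz_weight show ?thesis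
  proof eventually_elim
    case (elim \<omega>)
    show ?case
    proof (rule tendsto_Sup_abs_diff_from_nets
        [where f="\<lambda>n x. emp_norm Y d n x \<omega>" and g="F_norm M X d",
          OF _ G_finite G_net emp_norm_lipschitz F_norm_lipschitz elim(1)])
      show "?box \<noteq> {}" using x0_nonneg by auto
      show "(\<lambda>n. emp_norm Y d n y \<omega>) \<longlonglongrightarrow> F_norm M X d y" if "y \<in> G N" for N y
        using elim(2) that by blast
    qed
  qed
qed

end
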